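(* Let $n\ge p$, $\alpha\neq-1$, $U,\widetilde U\in St(n,p)$, and let $Q\widehat N=(I_n-UU^T)\widetilde U$ be a compact QR-decomposition with $Q\in St(n,p)$, $\widehat N\in\mathbb{R}^{p\times p}$. Consider the following shooting iteration with threshold $\epsilon>0$ and time steps $0=t_0<t_1<\dots<t_m=1$: set $\gamma\leftarrow\|\widetilde U-U\|$ and $\Delta\leftarrow\gamma\,\Pi_U(\widetilde U)/\|\Pi_U(\widetilde U)\|$; while $\gamma>\epsilon$: set $\widetilde U^s(j)\leftarrow\operatorname{Exp}^\alpha_U(t_j\Delta)$ for $j=0,\dots,m$; set $\Delta^s\leftarrow\widetilde U^s(m)-\widetilde U$ and $\gamma\leftarrow\|\Delta^s\|$; for $j=m,m-1,\dots,0$ set $\Delta^s\leftarrow\gamma\,\Pi_{\widetilde U^s(j)}(\Delta^s)/\|\Pi_{\widetilde U^s(j)}(\Delta^s)\|$; then update $\Delta\leftarrow\Delta-\Delta^s$. Then every iterate $\Delta$ produced by this iteration, and every matrix $\Delta^s$ obtained at the end of one pass through the while-loop, has a representation \[ \Delta=UA+QR,\qquad \Delta^s=UA^s+QR^s,\qquad A,A^s\in\operatorname{Skew}(p),\ R,R^s\in\mathbb{R}^{p\times p}, \] with the same matrix $Q$ for all iterates.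
   Context: $St(n,p)=\{U\in\mathbb{R}^{n\times p}: U^TU=I_p\}$; $\operatorname{Skew}(p)$ is the set of real skew-symmetric $p\times p$ matrices; $\|\cdot\|$ is the Frobenius norm. For $W\in\mathbb{R}^{n\times p}$ and $Y\in St(n,p)$, $\Pi_Y(W)=W-Y\operatorname{sym}(Y^TW)$ with $\operatorname{sym}(X)=\frac12(X+X^T)$ (orthogonal projection onto $T_YSt(n,p)=\{\Delta: Y^T\Delta\in\operatorname{Skew}(p)\}$). The $\alpha$-metric is $\langle\Delta,\widetilde\Delta\rangle^\alpha_U=\operatorname{tr}\big(\Delta^T(I_n-\frac{2\alpha+1}{2(\alpha+1)}UU^T)\widetilde\Delta\big)$ and $\operatorname{Exp}^\alpha_U(\Delta)$ is the endpoint at time $1$ of its geodesic starting at $U$ with initial velocity $\Delta$ (so $\operatorname{Exp}^\alpha_U(0)=U$). *)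

theory Defs
  imports "HOL-Analysis.Analysis"
begin

text \<open>Matrices in R^{n x p} are rendered as real^'p^'n (rows indexed by 'n, columns by 'p).
  The norm on this type is the Frobenius norm.\<close>

definition stiefel :: "(real^'p^'n) set" where
  "stiefel = {U. transpose U ** U = mat 1}"

definition skew :: "real^'p^'p \<Rightarrow> bool" where
  "skew A \<longleftrightarrow> transpose A = - A"

definition msym :: "real^'p^'p \<Rightarrow> real^'p^'p" where
  "msym X = (1/2) *\<^sub>R (X + transpose X)"

definition proj_tan :: "real^'p^'n \<Rightarrow> real^'p^'n \<Rightarrow> real^'p^'n" where
  "proj_tan Y W = W - Y ** msym (transpose Y ** W)"

definition alpha_coef :: "real \<Rightarrow> real" where
  "alpha_coef \<alpha> = (2 * \<alpha> + 1) / (2 * (\<alpha> + 1))"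

definition alpha_metric :: "real \<Rightarrow> real^'p^'n \<Rightarrow> real^'p^'n \<Rightarrow> real^'p^'n \<Rightarrow> real" where
  "alpha_metric \<alpha> U D E = trace (transpose D ** (mat 1 - alpha_coef \<alpha> *\<^sub>R (U ** transpose U)) ** E)"

text \<open>Geodesics of the alpha-metric on St(n,p): twice differentiable curves in St(n,p)
  satisfying the Euler--Lagrange equation of the energy Lagrangian
  L(x,v) = alpha_metric alpha x v v constrained to St(n,p), i.e.
  Pi_c( d/dt (c' - k c c^T c') + k c' c'^T c ) = 0, where
  d/dt (c c^T c') = c' c^T c' + c c'^T c' + c c^T c''.\<close>
definition alpha_geodesic :: "real \<Rightarrow> (real \<Rightarrow> real^'p^'n) \<Rightarrow> bool" where
  "alpha_geodesic \<alpha> c \<longleftrightarrow> (\<forall>t. c t \<in> stiefel) \<and>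
     (\<exists>c1 c2. \<forall>t. (c has_vector_derivative c1 t) (at t) \<and>
        (c1 has_vector_derivative c2 t) (at t) \<and>
        proj_tan (c t)
          (c2 t - alpha_coef \<alpha> *\<^sub>R (c1 t ** transpose (c t) ** c1 t
                                   + c t ** transpose (c1 t) ** c1 t
                                   + c t ** transpose (c t) ** c2 t)
                + alpha_coef \<alpha> *\<^sub>R (c1 t ** transpose (c1 t) ** c t)) = 0)"

definition Exp_alpha :: "real \<Rightarrow> real^'p^'n \<Rightarrow> real^'p^'n \<Rightarrow> real^'p^'n" where
  "Exp_alpha \<alpha> U D = (THE Y. \<exists>c. alpha_geodesic \<alpha> c \<and> c 0 = U \<and>
       (c has_vector_derivative D) (at 0) \<and> c 1 = Y)"

definition norm_proj :: "real \<Rightarrow> real^'p^'n \<Rightarrow> real^'p^'n \<Rightarrow> real^'p^'n" where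
  "norm_proj \<gamma> Y D = (\<gamma> / norm (proj_tan Y D)) *\<^sub>R proj_tan Y D"

text \<open>One pass through the body of the while loop starting from Delta.
  Returns (Delta^s at the end of the pass, new gamma).\<close>
definition shoot_pass :: "real \<Rightarrow> (nat \<Rightarrow> real) \<Rightarrow> nat \<Rightarrow> real^'p^'n \<Rightarrow> real^'p^'n
    \<Rightarrow> real^'p^'n \<Rightarrow> (real^'p^'n) \<times> real" where
  "shoot_pass \<alpha> t m U Ut D =
     (let Us = (\<lambda>j. Exp_alpha \<alpha> U (t j *\<^sub>R D));
          Ds0 = Us m - Ut;
          \<gamma> = norm Ds0;
          Ds = fold (\<lambda>j E. norm_proj \<gamma> (Us j) E) (rev [0..<Suc m]) Ds0
      in (Ds, \<gamma>))"

text \<open>State (Delta, gamma) after k passes (ignoring the stopping test).\<close>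
primrec shoot_iter :: "real \<Rightarrow> (nat \<Rightarrow> real) \<Rightarrow> nat \<Rightarrow> real^'p^'n \<Rightarrow> real^'p^'n
    \<Rightarrow> nat \<Rightarrow> (real^'p^'n) \<times> real" where
  "shoot_iter \<alpha> t m U Ut 0 =
     (let \<gamma> = norm (Ut - U) in (norm_proj \<gamma> U Ut, \<gamma>))"
| "shoot_iter \<alpha> t m U Ut (Suc k) =
     (let D = fst (shoot_iter \<alpha> t m U Ut k) in
      (D - fst (shoot_pass \<alpha> t m U Ut D), snd (shoot_pass \<alpha> t m U Ut D)))"

end

theory Submission
  imports Defs
begin

text \<open>For a tangent vector \<open>D\<close> at \<open>U\<close>, the \<open>\<alpha>\<close>-geodesic is \<open>t \<mapsto> exp(tX) U exp(tY)\<close> with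
  skew generators \<open>X\<close>, \<open>Y\<close> built from \<open>D\<close>. On the Stiefel manifold the geodesic equation is
  equivalent to a second-order ODE with polynomial right-hand side, so by Gronwall's inequality
  this is the only geodesic with these initial data and \<open>Exp\<^sup>\<alpha>\<^sub>U(D)\<close> is its value at time \<open>1\<close>.

  Put \<open>W = (I - U U\<^sup>T) Ut = Q N\<close>, so \<open>U\<^sup>T W = 0\<close>. If \<open>D = U A + W R\<close> with \<open>A\<close> skew, then
  \<open>X\<close> maps every matrix into the closed subspace \<open>{U X' + W Y'}\<close>, hence so does \<open>exp X\<close>, and
  \<open>Exp\<^sup>\<alpha>\<^sub>U(t D)\<close> lies in it. The projections \<open>\<Pi>\<^sub>Y\<close> with \<open>Y\<close> in this subspace preserve it,
  \<open>Ut\<close> belongs to it, and the backward sweep ends with \<open>\<Pi>\<^sub>U\<close> because \<open>t\<^sub>0 = 0\<close>; \<open>\<Pi>\<^sub>U\<close> maps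
  \<open>U X' + W Y'\<close> to \<open>U skew(X') + W Y'\<close>. Induction over the passes gives the representation
  with \<open>W\<close>, and \<open>W R = Q (N R)\<close>.\<close>

section \<open>Matrix calculus in the Frobenius norm\<close>

lemma transpose_add: "transpose (A + B) = transpose A + transpose (B::'a::semiring_1^'m^'n)"
  by (simp add: transpose_def vec_eq_iff)

lemma transpose_diff: "transpose (A - B) = transpose A - transpose (B::'a::ring_1^'m^'n)"
  by (simp add: transpose_def vec_eq_iff)

lemma transpose_uminus: "transpose (- A) = - transpose (A::'a::ring_1^'m^'n)"
  by (simp add: transpose_def vec_eq_iff)

lemma transpose_zero [simp]: "transpose (0::'a::semiring_1^'m^'n) = 0"
  by (simp add: transpose_def vec_eq_iff)

lemma matrix_add_rdistrib: "(A + B) ** C = A ** C + B ** (C::'a::semiring_1^_^_)"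
  by (simp add: vec_eq_iff matrix_matrix_mult_def sum.distrib distrib_right)

lemma matrix_diff_ldistrib: "A ** (B - C) = A ** B - A ** (C::'a::ring_1^_^_)"
  by (simp add: vec_eq_iff matrix_matrix_mult_def sum_subtractf right_diff_distrib)

lemma matrix_diff_rdistrib: "(A - B) ** C = A ** C - B ** (C::'a::ring_1^_^_)"
  by (simp add: vec_eq_iff matrix_matrix_mult_def sum_subtractf left_diff_distrib)

lemma matrix_uminus_left: "(- A) ** B = - (A ** (B::'a::ring_1^_^_))"
  by (simp add: vec_eq_iff matrix_matrix_mult_def sum_negf)

lemma matrix_uminus_right: "A ** (- B) = - (A ** (B::'a::ring_1^_^_))"
  by (simp add: vec_eq_iff matrix_matrix_mult_def sum_negf)

lemma matrix_scaleR_left: "(k *\<^sub>R A) ** B = k *\<^sub>R (A ** (B::real^_^_))"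
  by (simp add: scalar_matrix_assoc)

lemma matrix_scaleR_right: "A ** (k *\<^sub>R B) = k *\<^sub>R (A ** (B::real^_^_))"
  by (simp add: matrix_scalar_ac scalar_matrix_assoc)

text \<open>Normalising with \<open>algebra_simps\<close> turns \<open>X + X\<close> into the componentwise product \<open>2 * X\<close>
  with the constant matrix \<open>2\<close>; this rule turns it back into a scalar multiple.\<close>
lemma two_times_matrix: "(2::real^'p^'n) * X = 2 *\<^sub>R X"
  by (simp add: vec_eq_iff)

lemmas matrix_ring_simps = matrix_add_ldistrib matrix_add_rdistrib matrix_diff_ldistrib
  matrix_diff_rdistrib matrix_uminus_left matrix_uminus_right matrix_scaleR_left matrix_scaleR_right
  matrix_mul_assoc transpose_add transpose_diff transpose_uminus transpose_scalar
  matrix_transpose_mul transpose_transpose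

text \<open>The simplifier reassociates products to the left, so an identity \<open>A ** B = C\<close> is only
  usable for rewriting together with this extended form.\<close>
lemma matrix_mul_eq_extend: "A ** B = C \<Longrightarrow> X ** A ** B = X ** (C::'a::semiring_1^_^_)"
  by (simp add: matrix_mul_assoc[symmetric])

lemma norm_matrix_sq: "(norm (A::real^'m^'n))\<^sup>2 = (\<Sum>i\<in>UNIV. \<Sum>j\<in>UNIV. (A $ i $ j)\<^sup>2)"
  by (simp add: norm_vec_def L2_set_def sum_nonneg)

lemma norm_matrix_rows_sq: "(norm (A::real^'m^'n))\<^sup>2 = (\<Sum>i\<in>UNIV. (norm (A $ i))\<^sup>2)"
  by (simp add: norm_vec_def L2_set_def sum_nonneg)

lemma norm_transpose: "norm (transpose (A::real^'m^'n)) = norm A"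
proof -
  have "(norm (transpose A))\<^sup>2 = (norm A)\<^sup>2"
    unfolding norm_matrix_sq by (simp add: transpose_def) (rule sum.swap)
  then show ?thesis by (simp add: power2_eq_iff_nonneg)
qed

lemma norm_matrix_mult_le: "norm (A ** B) \<le> norm A * norm (B::real^'k^'m)"
proof -
  have entry: "(A ** B) $ i $ j = inner (A $ i) (transpose B $ j)" for i j
    by (simp add: matrix_matrix_mult_def inner_vec_def transpose_def)
  have "(norm (A ** B))\<^sup>2 = (\<Sum>i\<in>UNIV. \<Sum>j\<in>UNIV. (inner (A $ i) (transpose B $ j))\<^sup>2)"
    by (simp add: norm_matrix_sq entry)
  also have "\<dots> \<le> (\<Sum>i\<in>UNIV. \<Sum>j\<in>UNIV. (norm (A $ i))\<^sup>2 * (norm (transpose B $ j))\<^sup>2)"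
  proof (intro sum_mono)
    fix i j
    have "\<bar>inner (A $ i) (transpose B $ j)\<bar> \<le> norm (A $ i) * norm (transpose B $ j)"
      by (rule Cauchy_Schwarz_ineq2)
    then have "\<bar>inner (A $ i) (transpose B $ j)\<bar>\<^sup>2 \<le> (norm (A $ i) * norm (transpose B $ j))\<^sup>2"
      by (rule power_mono) simp
    then show "(inner (A $ i) (transpose B $ j))\<^sup>2 \<le> (norm (A $ i))\<^sup>2 * (norm (transpose B $ j))\<^sup>2"
      by (simp add: power_mult_distrib)
  qed
  also have "\<dots> = (\<Sum>i\<in>UNIV. (norm (A $ i))\<^sup>2) * (\<Sum>j\<in>UNIV. (norm (transpose B $ j))\<^sup>2)"
    by (simp add: sum_product)
  also have "\<dots> = (norm A * norm B)\<^sup>2"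
    by (simp add: norm_matrix_rows_sq[symmetric] norm_transpose power_mult_distrib)
  finally show ?thesis by (simp add: power2_le_iff_abs_le)
qed

lemma bounded_bilinear_matrix_mult: "bounded_bilinear ((**) :: real^'m^'n \<Rightarrow> real^'k^'m \<Rightarrow> _)"
  by (rule bounded_bilinear.intro)
    (auto simp: matrix_add_ldistrib matrix_add_rdistrib matrix_scaleR_left matrix_scaleR_right
      intro!: exI[where x=1] norm_matrix_mult_le)

lemma bounded_linear_transpose: "bounded_linear (transpose :: real^'m^'n \<Rightarrow> real^'n^'m)"
  by (rule bounded_linear_intro[where K=1])
    (auto simp: transpose_add transpose_scalar norm_transpose)

lemma has_vector_derivative_matrix_mult:
  fixes f :: "real \<Rightarrow> real^'m^'n" and g :: "real \<Rightarrow> real^'k^'m"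
  assumes "(f has_vector_derivative f') (at x within s)"
    and "(g has_vector_derivative g') (at x within s)"
  shows "((\<lambda>x. f x ** g x) has_vector_derivative (f x ** g' + f' ** g x)) (at x within s)"
  by (rule bounded_bilinear.has_vector_derivative[OF bounded_bilinear_matrix_mult assms])

section \<open>The matrix exponential\<close>

text \<open>Square matrices with the operator norm form a Banach algebra, so the exponential of the
  library applies to them.\<close>
typedef ('n::finite) sqmat = "UNIV :: (real^'n^'n) set" by auto

setup_lifting type_definition_sqmat

instantiation sqmat :: (finite) real_normed_algebra_1
begin

lift_definition zero_sqmat :: "'a sqmat" is "0" .
lift_definition one_sqmat :: "'a sqmat" is "mat 1" .
lift_definition plus_sqmat :: "'a sqmat \<Rightarrow> 'a sqmat \<Rightarrow> 'a sqmat" is "(+)" .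
lift_definition minus_sqmat :: "'a sqmat \<Rightarrow> 'a sqmat \<Rightarrow> 'a sqmat" is "(-)" .
lift_definition uminus_sqmat :: "'a sqmat \<Rightarrow> 'a sqmat" is "uminus" .
lift_definition times_sqmat :: "'a sqmat \<Rightarrow> 'a sqmat \<Rightarrow> 'a sqmat" is "(**)" .
lift_definition scaleR_sqmat :: "real \<Rightarrow> 'a sqmat \<Rightarrow> 'a sqmat" is "scaleR" .
lift_definition norm_sqmat :: "'a sqmat \<Rightarrow> real" is "\<lambda>A. onorm ((*v) A)" .

definition dist_sqmat :: "'a sqmat \<Rightarrow> 'a sqmat \<Rightarrow> real"
  where "dist_sqmat a b = norm (a - b)"

definition uniformity_sqmat :: "('a sqmat \<times> 'a sqmat) filter"
  where "uniformity_sqmat = (INF e\<in>{0 <..}. principal {(x, y). dist x y < e})"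

definition open_sqmat :: "'a sqmat set \<Rightarrow> bool"
  where "open_sqmat S = (\<forall>x\<in>S. \<forall>\<^sub>F (x', y) in uniformity. x' = x \<longrightarrow> y \<in> S)"

definition sgn_sqmat :: "'a sqmat \<Rightarrow> 'a sqmat"
  where "sgn_sqmat x = inverse (norm x) *\<^sub>R x"

instance
proof
  fix a b c :: "'a sqmat" and r s :: real and S :: "'a sqmat set"
  show "a * b * c = a * (b * c)" by transfer (simp add: matrix_mul_assoc)
  show "(a + b) * c = a * c + b * c" by transfer (rule matrix_add_rdistrib)
  show "a * (b + c) = a * b + a * c" by transfer (rule matrix_add_ldistrib)
  show "1 * a = a" by transfer simp
  show "a * 1 = a" by transfer simp
  show "(0::'a sqmat) \<noteq> 1" by transfer (simp add: vec_eq_iff mat_def)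
  show "a + b + c = a + (b + c)" by transfer simp
  show "a + b = b + a" by transfer simp
  show "0 + a = a" by transfer simp
  show "- a + a = 0" by transfer simp
  show "a - b = a + - b" by transfer simp
  show "r *\<^sub>R (a + b) = r *\<^sub>R a + r *\<^sub>R b" by transfer (rule scaleR_right_distrib)
  show "(r + s) *\<^sub>R a = r *\<^sub>R a + s *\<^sub>R a" by transfer (rule scaleR_left_distrib)
  show "r *\<^sub>R s *\<^sub>R a = (r * s) *\<^sub>R a" by transfer simp
  show "1 *\<^sub>R a = a" by transfer simp
  show "r *\<^sub>R a * b = r *\<^sub>R (a * b)" by transfer (rule matrix_scaleR_left)
  show "a * r *\<^sub>R b = r *\<^sub>R (a * b)" by transfer (rule matrix_scaleR_right)
  show "dist a b = norm (a - b)" by (simp add: dist_sqmat_def)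
  show "sgn a = inverse (norm a) *\<^sub>R a" by (simp add: sgn_sqmat_def)
  show "uniformity = (INF e\<in>{0<..}. principal {(x::'a sqmat, y). dist x y < e})"
    by (simp add: uniformity_sqmat_def)
  show "open S = (\<forall>x\<in>S. \<forall>\<^sub>F (x', y) in uniformity. x' = x \<longrightarrow> y \<in> S)"
    by (simp add: open_sqmat_def)
  show "(norm a = 0) = (a = 0)"
  proof transfer
    fix A :: "real^'a^'a"
    show "(onorm ((*v) A) = 0) = (A = 0)"
      using onorm_eq_0[OF matrix_vector_mul_bounded_linear] matrix_eq[of A 0] by auto
  qed
  show "norm (a + b) \<le> norm a + norm b"
  proof transfer
    fix A B :: "real^'a^'a"
    have "(*v) (A + B) = (\<lambda>x. A *v x + B *v x)"
      by (simp add: fun_eq_iff matrix_vector_mult_add_rdistrib)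
    then show "onorm ((*v) (A + B)) \<le> onorm ((*v) A) + onorm ((*v) B)"
      using onorm_triangle[OF matrix_vector_mul_bounded_linear matrix_vector_mul_bounded_linear]
      by simp
  qed
  show "norm (r *\<^sub>R a) = \<bar>r\<bar> * norm a"
  proof -
    have "(*v) (r *\<^sub>R Rep_sqmat a) = (\<lambda>x. r *\<^sub>R (Rep_sqmat a *v x))"
      by (simp add: fun_eq_iff matrix_vector_mult_def vec_eq_iff sum_distrib_left mult.assoc)
    then show ?thesis
      using onorm_scaleR[OF matrix_vector_mul_bounded_linear, of r "Rep_sqmat a"]
      by (simp add: norm_sqmat.rep_eq scaleR_sqmat.rep_eq)
  qed
  show "norm (a * b) \<le> norm a * norm b"
  proof transfer
    fix A B :: "real^'a^'a"
    have "(*v) (A ** B) = (*v) A \<circ> (*v) B" by (auto simp: matrix_vector_mul_assoc)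
    then show "onorm ((*v) (A ** B)) \<le> onorm ((*v) A) * onorm ((*v) B)"
      using onorm_compose[OF matrix_vector_mul_bounded_linear matrix_vector_mul_bounded_linear]
      by simp
  qed
  show "norm (1::'a sqmat) = 1"
  proof transfer
    have "(*v) (mat 1::real^'a^'a) = (\<lambda>x. x)" by (simp add: fun_eq_iff)
    then show "onorm ((*v) (mat 1::real^'a^'a)) = 1" using onorm_id[where 'a="real^'a"] by simp
  qed
qed

end

lemma norm_Rep_sqmat_le:
  "norm (Rep_sqmat a) \<le> real (CARD('n) * CARD('n)) * norm (a::'n::finite sqmat)"
proof -
  have "norm (Rep_sqmat a) \<le> (\<Sum>i\<in>UNIV. norm (Rep_sqmat a $ i))"
    by (simp add: norm_vec_def L2_set_le_sum)
  also have "\<dots> \<le> (\<Sum>i\<in>(UNIV::'n set). \<Sum>j\<in>(UNIV::'n set). norm a)"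
  proof (rule sum_mono)
    fix i
    have "norm (Rep_sqmat a $ i) \<le> (\<Sum>j\<in>UNIV. \<bar>Rep_sqmat a $ i $ j\<bar>)" by (rule norm_le_l1_cart)
    also have "\<dots> \<le> (\<Sum>j\<in>(UNIV::'n set). norm a)"
      by (rule sum_mono) (simp add: norm_sqmat.rep_eq matrix_component_le_onorm)
    finally show "norm (Rep_sqmat a $ i) \<le> (\<Sum>j\<in>(UNIV::'n set). norm a)" .
  qed
  also have "\<dots> = real (CARD('n) * CARD('n)) * norm a" by simp
  finally show ?thesis .
qed

lemma norm_Abs_sqmat_le:
  "norm (Abs_sqmat M :: 'n::finite sqmat) \<le> real (CARD('n) * CARD('n)) * norm M"
proof -
  have "norm (Abs_sqmat M :: 'n sqmat) = onorm ((*v) M)"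
    by (simp add: norm_sqmat.rep_eq Abs_sqmat_inverse)
  also have "\<dots> \<le> (\<Sum>i\<in>UNIV. \<Sum>j\<in>UNIV. \<bar>M $ i $ j\<bar>)" by (rule onorm_le_matrix_component_sum)
  also have "\<dots> \<le> (\<Sum>i\<in>(UNIV::'n set). \<Sum>j\<in>(UNIV::'n set). norm M)"
  proof (intro sum_mono)
    fix i j
    have "\<bar>M $ i $ j\<bar> \<le> norm (M $ i)" by (rule component_le_norm_cart)
    also have "\<dots> \<le> norm M" by (rule Finite_Cartesian_Product.norm_nth_le)
    finally show "\<bar>M $ i $ j\<bar> \<le> norm M" .
  qed
  also have "\<dots> = real (CARD('n) * CARD('n)) * norm M" by simp
  finally show ?thesis .
qed

lemma bounded_linear_Rep_sqmat: "bounded_linear (Rep_sqmat :: 'n::finite sqmat \<Rightarrow> _)"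
  by (rule bounded_linear_intro[where K="real (CARD('n) * CARD('n))"])
    (use norm_Rep_sqmat_le in \<open>auto simp: plus_sqmat.rep_eq scaleR_sqmat.rep_eq mult.commute\<close>)

lemma bounded_linear_Abs_sqmat: "bounded_linear (Abs_sqmat :: _ \<Rightarrow> 'n::finite sqmat)"
  by (rule bounded_linear_intro[where K="real (CARD('n) * CARD('n))"])
    (use norm_Abs_sqmat_le in
      \<open>auto simp: plus_sqmat_def scaleR_sqmat_def Abs_sqmat_inverse mult.commute\<close>)

instance sqmat :: (finite) banach
proof
  fix X :: "nat \<Rightarrow> 'a sqmat"
  assume "Cauchy X"
  then have "Cauchy (\<lambda>n. Rep_sqmat (X n))"
    by (rule bounded_linear.Cauchy[OF bounded_linear_Rep_sqmat])
  then obtain L where "(\<lambda>n. Rep_sqmat (X n)) \<longlonglongrightarrow> L"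
    by (auto simp: Cauchy_convergent_iff convergent_def)
  then have "(\<lambda>n. Abs_sqmat (Rep_sqmat (X n)) :: 'a sqmat) \<longlonglongrightarrow> Abs_sqmat L"
    by (rule bounded_linear.tendsto[OF bounded_linear_Abs_sqmat])
  then show "convergent X" by (auto simp: Rep_sqmat_inverse convergent_def)
qed

lift_definition transpose_sqmat :: "'n::finite sqmat \<Rightarrow> 'n sqmat" is transpose .

lemma bounded_linear_transpose_sqmat: "bounded_linear (transpose_sqmat :: 'n::finite sqmat \<Rightarrow> _)"
proof -
  have "bounded_linear (\<lambda>a::'n sqmat. Abs_sqmat (transpose (Rep_sqmat a)))"
    by (intro bounded_linear_compose[OF bounded_linear_Abs_sqmat]
        bounded_linear_compose[OF bounded_linear_transpose bounded_linear_Rep_sqmat])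
  then show ?thesis by (simp add: transpose_sqmat_def map_fun_def comp_def)
qed

lemma transpose_sqmat_power: "transpose_sqmat (a ^ n) = transpose_sqmat a ^ n"
proof (induction n)
  case 0
  show ?case by (simp add: transpose_sqmat_def one_sqmat_def Abs_sqmat_inverse)
next
  case (Suc n)
  have "transpose_sqmat (a * b) = transpose_sqmat b * transpose_sqmat a" for b
    by transfer (rule matrix_transpose_mul)
  with Suc show ?case by (simp add: power_Suc2 power_commutes)
qed

lemma transpose_sqmat_exp: "transpose_sqmat (exp a) = exp (transpose_sqmat a)"
proof -
  interpret bounded_linear transpose_sqmat by (rule bounded_linear_transpose_sqmat)
  have "transpose_sqmat (exp a) = (\<Sum>n. transpose_sqmat (a ^ n /\<^sub>R fact n))"
    unfolding exp_def by (rule suminf[OF summable_exp_generic])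
  also have "\<dots> = exp (transpose_sqmat a)" by (simp add: exp_def transpose_sqmat_power scaleR)
  finally show ?thesis .
qed

definition mat_exp :: "real^'n^'n \<Rightarrow> real^'n^'n::finite"
  where "mat_exp M = Rep_sqmat (exp (Abs_sqmat M))"

lemma Abs_sqmat_scaleR: "Abs_sqmat (t *\<^sub>R M) = t *\<^sub>R Abs_sqmat M"
  by (simp add: scaleR_sqmat_def Abs_sqmat_inverse)

lemma mat_exp_zero [simp]: "mat_exp (0::real^'n::finite^'n) = mat 1"
  by (simp add: mat_exp_def zero_sqmat_def[symmetric] one_sqmat.rep_eq)

lemma has_vector_derivative_mat_exp:
  "((\<lambda>t. mat_exp (t *\<^sub>R M)) has_vector_derivative mat_exp (t *\<^sub>R M) ** M) (at t)"
proof -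
  have "((\<lambda>t. Rep_sqmat (exp (t *\<^sub>R Abs_sqmat M))) has_vector_derivative
      Rep_sqmat (exp (t *\<^sub>R Abs_sqmat M) * Abs_sqmat M)) (at t)"
    by (rule bounded_linear.has_vector_derivative[OF bounded_linear_Rep_sqmat
          exp_scaleR_has_vector_derivative_right])
  then show ?thesis by (simp add: mat_exp_def Abs_sqmat_scaleR times_sqmat.rep_eq Abs_sqmat_inverse)
qed

lemma mat_exp_scaleR_commute:
  shows "mat_exp (t *\<^sub>R M) ** M = M ** mat_exp (t *\<^sub>R M)"
    and "W ** mat_exp (t *\<^sub>R M) ** M = W ** M ** mat_exp (t *\<^sub>R M)"
proof -
  show commute: "mat_exp (t *\<^sub>R M) ** M = M ** mat_exp (t *\<^sub>R M)"
    using exp_times_scaleR_commute[of t "Abs_sqmat M"]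
    by (metis mat_exp_def Abs_sqmat_scaleR times_sqmat.rep_eq Abs_sqmat_inverse UNIV_I)
  then show "W ** mat_exp (t *\<^sub>R M) ** M = W ** M ** mat_exp (t *\<^sub>R M)"
    by (metis matrix_mul_assoc)
qed

lemma mat_exp_skew_orthogonal:
  assumes "transpose M = - M"
  shows "transpose (mat_exp M) ** mat_exp M = mat 1"
    and "mat_exp M ** transpose (mat_exp M) = mat 1"
proof -
  have skew: "transpose_sqmat (Abs_sqmat M) = - Abs_sqmat M"
    using assms by (simp add: transpose_sqmat_def Abs_sqmat_inverse uminus_sqmat_def)
  have "transpose (mat_exp M) = Rep_sqmat (exp (- Abs_sqmat M))"
    by (metis mat_exp_def transpose_sqmat.rep_eq transpose_sqmat_exp skew Rep_sqmat_inverse)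
  moreover have "exp (- Abs_sqmat M) * exp (Abs_sqmat M) = 1"
    and "exp (Abs_sqmat M) * exp (- Abs_sqmat M) = 1"
    using exp_minus_inverse[of "- Abs_sqmat M"] exp_minus_inverse[of "Abs_sqmat M"] by simp_all
  ultimately show "transpose (mat_exp M) ** mat_exp M = mat 1"
    and "mat_exp M ** transpose (mat_exp M) = mat 1"
    by (metis mat_exp_def times_sqmat.rep_eq one_sqmat.rep_eq)+
qed

lemma mat_exp_mult_in_invariant_subspace:
  fixes X :: "real^'n::finite^'n" and U :: "real^'p^'n"
  assumes S: "closed S" "subspace S" and U: "U \<in> S" and X: "\<And>Z. Z \<in> S \<Longrightarrow> X ** Z \<in> S"
  shows "mat_exp X ** U \<in> S"
proof -
  let ?a = "Abs_sqmat X"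
  have lin: "bounded_linear (\<lambda>a. Rep_sqmat a ** U)"
    using bounded_linear_compose[OF bounded_bilinear.bounded_linear_left[OF
          bounded_bilinear_matrix_mult, where b=U] bounded_linear_Rep_sqmat] by simp
  have summable: "summable (\<lambda>n. ?a ^ n /\<^sub>R fact n)" by (rule summable_exp_generic)
  have powers: "Rep_sqmat (?a ^ n) ** U \<in> S" for n
  proof (induction n)
    case 0
    show ?case using U by (simp add: one_sqmat.rep_eq)
  next
    case (Suc n)
    have "Rep_sqmat (?a ^ Suc n) ** U = X ** (Rep_sqmat (?a ^ n) ** U)"
      by (simp add: times_sqmat.rep_eq Abs_sqmat_inverse matrix_mul_assoc)
    with Suc X show ?case by simp
  qed
  have terms: "Rep_sqmat (?a ^ n /\<^sub>R fact n) ** U \<in> S" for n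
    using powers[of n] S(2) by (simp add: scaleR_sqmat.rep_eq matrix_scaleR_left subspace_scale)
  have "(\<lambda>n. \<Sum>i<n. Rep_sqmat (?a ^ i /\<^sub>R fact i) ** U) \<longlonglongrightarrow> mat_exp X ** U"
    using summable_LIMSEQ[OF bounded_linear.summable[OF lin summable]]
      bounded_linear.suminf[OF lin summable]
    by (simp add: mat_exp_def exp_def)
  moreover have "(\<Sum>i<n. Rep_sqmat (?a ^ i /\<^sub>R fact i) ** U) \<in> S" for n
    by (rule subspace_sum[OF S(2)]) (rule terms)
  ultimately show ?thesis by (rule closed_sequentially[OF S(1), rotated])
qed

section \<open>Uniqueness for autonomous ODEs with locally Lipschitz right-hand side\<close>

definition bounded_lipschitz_on :: "'a::metric_space set \<Rightarrow> ('a \<Rightarrow> 'b::real_normed_vector) \<Rightarrow> bool"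
  where "bounded_lipschitz_on S f \<longleftrightarrow> bounded (f ` S) \<and> (\<exists>L. L-lipschitz_on S f)"

lemma bounded_lipschitz_on_bounded_linear:
  "bounded S \<Longrightarrow> bounded_linear f \<Longrightarrow> bounded_lipschitz_on S f"
  unfolding bounded_lipschitz_on_def
  by (meson bounded_linear.lipschitz_boundE bounded_linear_image)

lemma bounded_lipschitz_on_linear_compose:
  assumes h: "bounded_linear h" and f: "bounded_lipschitz_on S f"
  shows "bounded_lipschitz_on S (\<lambda>x. h (f x))"
proof -
  obtain L where L: "L-lipschitz_on S f" using f by (auto simp: bounded_lipschitz_on_def)
  obtain K where "K-lipschitz_on (f ` S) h" using bounded_linear.lipschitz_boundE[OF h] by blast
  then have "(K * L)-lipschitz_on S (h \<circ> f)" by (rule lipschitz_on_compose[OF L])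
  moreover have "bounded (h ` f ` S)"
    using bounded_linear_image[OF _ h] f by (simp add: bounded_lipschitz_on_def)
  ultimately show ?thesis by (auto simp: bounded_lipschitz_on_def comp_def image_image)
qed

lemma bounded_lipschitz_on_diff:
  "bounded_lipschitz_on S f \<Longrightarrow> bounded_lipschitz_on S g \<Longrightarrow> bounded_lipschitz_on S (\<lambda>x. f x - g x)"
  unfolding bounded_lipschitz_on_def by (metis bounded_minus_comp lipschitz_on_diff)

lemma bounded_lipschitz_on_Pair:
  assumes f: "bounded_lipschitz_on S f" and g: "bounded_lipschitz_on S g"
  shows "bounded_lipschitz_on S (\<lambda>x. (f x, g x))"
proof -
  have "(\<lambda>x. (f x, g x)) ` S \<subseteq> f ` S \<times> g ` S" by auto
  then have "bounded ((\<lambda>x. (f x, g x)) ` S)"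
    using f g bounded_Times bounded_subset by (metis bounded_lipschitz_on_def)
  moreover obtain L1 L2 where "L1-lipschitz_on S f" "L2-lipschitz_on S g"
    using f g by (auto simp: bounded_lipschitz_on_def)
  ultimately show ?thesis by (auto simp: bounded_lipschitz_on_def intro: lipschitz_on_Pair)
qed

lemma bounded_lipschitz_on_bilinear:
  assumes bil: "bounded_bilinear bil"
    and f: "bounded_lipschitz_on S f" and g: "bounded_lipschitz_on S g"
  shows "bounded_lipschitz_on S (\<lambda>x. bil (f x) (g x))"
proof -
  interpret bounded_bilinear bil by (rule bil)
  obtain K where K: "K > 0" "\<And>a b. norm (bil a b) \<le> norm a * norm b * K"
    using pos_bounded by blast
  obtain L1 B1 where L1: "L1-lipschitz_on S f" and B1: "\<And>x. x \<in> S \<Longrightarrow> norm (f x) \<le> B1"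
    and "0 < B1" using f by (auto simp: bounded_lipschitz_on_def bounded_pos)
  obtain L2 B2 where L2: "L2-lipschitz_on S g" and B2: "\<And>x. x \<in> S \<Longrightarrow> norm (g x) \<le> B2"
    and "0 < B2" using g by (auto simp: bounded_lipschitz_on_def bounded_pos)
  have "0 \<le> L1" "0 \<le> L2" using L1 L2 by (simp_all add: lipschitz_on_nonneg)
  have bound: "norm (bil (f x) (g x)) \<le> B1 * B2 * K" if "x \<in> S" for x
    using K(2)[of "f x" "g x"] B1[OF that] B2[OF that] K(1)
    by (smt (verit) mult_mono mult_right_mono norm_ge_zero zero_le_mult_iff)
  have "(K * (L1 * B2 + B1 * L2))-lipschitz_on S (\<lambda>x. bil (f x) (g x))"
  proof (rule lipschitz_onI)
    fix x y assume x: "x \<in> S" and y: "y \<in> S"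
    have split: "bil (f x) (g x) - bil (f y) (g y) = bil (f x - f y) (g x) + bil (f y) (g x - g y)"
      by (simp add: diff_left diff_right)
    have "norm (bil (f x - f y) (g x)) \<le> (L1 * dist x y) * B2 * K"
      using K(2)[of "f x - f y" "g x"] lipschitz_onD[OF L1 x y] B2[OF x] K(1)
      by (smt (verit) dist_norm mult_mono mult_right_mono norm_ge_zero zero_le_dist)
    moreover have "norm (bil (f y) (g x - g y)) \<le> B1 * (L2 * dist x y) * K"
      using K(2)[of "f y" "g x - g y"] lipschitz_onD[OF L2 x y] B1[OF y] K(1)
      by (smt (verit) dist_norm mult_mono mult_right_mono norm_ge_zero zero_le_dist)
    ultimately show "dist (bil (f x) (g x)) (bil (f y) (g y)) \<le> K * (L1 * B2 + B1 * L2) * dist x y"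
      unfolding dist_norm split
      by (smt (verit) norm_triangle_ineq distrib_left mult.commute mult.left_commute)
  next
    show "0 \<le> K * (L1 * B2 + B1 * L2)"
      using \<open>0 < K\<close> \<open>0 < B1\<close> \<open>0 < B2\<close> \<open>0 \<le> L1\<close> \<open>0 \<le> L2\<close> by simp
  qed
  with bound show ?thesis by (auto simp: bounded_lipschitz_on_def bounded_iff)
qed

lemma gronwall_zero:
  fixes f f' :: "real \<Rightarrow> real"
  assumes deriv: "\<And>t. t \<in> {0..T} \<Longrightarrow> (f has_real_derivative f' t) (at t)"
    and bound: "\<And>t. t \<in> {0..T} \<Longrightarrow> f' t \<le> K * f t"
    and nonneg: "\<And>t. t \<in> {0..T} \<Longrightarrow> 0 \<le> f t" and zero: "f 0 = 0" and T: "0 \<le> T"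
  shows "f T = 0"
proof -
  define g where "g t = exp (- K * t) * f t" for t
  have "(g has_real_derivative exp (- K * t) * (f' t - K * f t)) (at t)" if "t \<in> {0..T}" for t
  proof -
    have "(g has_real_derivative exp (- K * t) * (- K) * f t + exp (- K * t) * f' t) (at t)"
      unfolding g_def[abs_def] by (auto intro!: derivative_eq_intros deriv[OF that])
    then show ?thesis by (simp add: algebra_simps)
  qed
  moreover have "exp (- K * t) * (f' t - K * f t) \<le> 0" if "t \<in> {0..T}" for t
    using bound[OF that] by (simp add: mult_nonneg_nonpos)
  ultimately have "g T \<le> g 0" using T by (rule deriv_nonpos_imp_antimono)
  then have "f T \<le> 0" by (simp add: g_def zero mult_le_0_iff)
  with nonneg[of T] T show ?thesis by simp
qed

lemma autonomous_ode_unique: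
  fixes F :: "'a::real_inner \<Rightarrow> 'a" and y z :: "real \<Rightarrow> 'a"
  assumes F: "\<And>S. bounded S \<Longrightarrow> \<exists>L. L-lipschitz_on S F"
    and y: "\<And>t. (y has_vector_derivative F (y t)) (at t)"
    and z: "\<And>t. (z has_vector_derivative F (z t)) (at t)"
    and init: "y 0 = z 0" and T: "0 \<le> T"
  shows "y T = z T"
proof -
  have "continuous_on {0..T} y" "continuous_on {0..T} z"
    using y z by (meson continuous_at_imp_continuous_on has_vector_derivative_continuous)+
  then have "bounded (y ` {0..T} \<union> z ` {0..T})"
    by (simp add: compact_imp_bounded compact_continuous_image)
  then obtain L where L: "L-lipschitz_on (y ` {0..T} \<union> z ` {0..T}) F" using F by blast
  define f where "f t = inner (y t - z t) (y t - z t)" for t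
  define f' where "f' t = 2 * inner (y t - z t) (F (y t) - F (z t))" for t
  have "f T = 0"
  proof (rule gronwall_zero[where f = f and f' = f' and K = "2 * L" and T = T])
    fix t :: real assume t: "t \<in> {0..T}"
    have "(f has_vector_derivative inner (y t - z t) (F (y t) - F (z t))
        + inner (F (y t) - F (z t)) (y t - z t)) (at t)"
      unfolding f_def[abs_def]
      by (rule bounded_bilinear.has_vector_derivative[OF bounded_bilinear_inner]
          has_vector_derivative_diff y z)+
    then show "(f has_real_derivative f' t) (at t)"
      by (simp add: f'_def has_real_derivative_iff_has_vector_derivative inner_commute)
    have "norm (F (y t) - F (z t)) \<le> L * norm (y t - z t)"
      using t by (intro lipschitz_on_normD[OF L]) auto
    then have "f' t \<le> 2 * (norm (y t - z t) * (L * norm (y t - z t)))"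
      unfolding f'_def
      by (smt (verit) Cauchy_Schwarz_ineq2 mult_left_mono norm_ge_zero)
    then show "f' t \<le> 2 * L * f t"
      by (simp add: f_def power2_norm_eq_inner[symmetric] power2_eq_square mult_ac)
    show "0 \<le> f t" by (simp add: f_def)
  qed (simp_all add: f_def init T)
  then show ?thesis by (simp add: f_def)
qed

section \<open>The geodesic equation on the Stiefel manifold\<close>

definition geodesic_residual :: "real \<Rightarrow> real^'p^'n \<Rightarrow> real^'p^'n \<Rightarrow> real^'p^'n \<Rightarrow> real^'p^'n"
  where "geodesic_residual k c v a =
    a - k *\<^sub>R (v ** transpose c ** v + c ** transpose v ** v + c ** transpose c ** a)
      + k *\<^sub>R (v ** transpose v ** c)"

lemma alpha_geodesic_iff:
  "alpha_geodesic \<alpha> c \<longleftrightarrow> (\<forall>t. c t \<in> stiefel) \<and>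
     (\<exists>c1 c2. \<forall>t. (c has_vector_derivative c1 t) (at t) \<and> (c1 has_vector_derivative c2 t) (at t) \<and>
        proj_tan (c t) (geodesic_residual (alpha_coef \<alpha>) (c t) (c1 t) (c2 t)) = 0)"
  by (simp add: alpha_geodesic_def geodesic_residual_def)

definition geodesic_accel :: "real \<Rightarrow> real^'p^'n \<Rightarrow> real^'p^'n \<Rightarrow> real^'p^'n"
  where "geodesic_accel k c v =
    (2 * k) *\<^sub>R ((v - c ** (transpose c ** v)) ** (transpose c ** v)) - c ** (transpose v ** v)"

lemma geodesic_accel_equivariant:
  fixes V :: "real^'n^'n" and P :: "real^'p^'p" and c v :: "real^'p^'n"
  assumes V: "transpose V ** V = mat 1" and P: "P ** transpose P = mat 1"
  shows "geodesic_accel k (V ** c ** P) (V ** v ** P) = V ** geodesic_accel k c v ** P"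
  unfolding geodesic_accel_def
  by (simp add: matrix_ring_simps V P matrix_mul_eq_extend[OF V] matrix_mul_eq_extend[OF P])

lemma msym_eq_self: "transpose S = S \<Longrightarrow> msym S = S"
  by (simp add: msym_def scaleR_2[symmetric])

lemma transpose_msym: "transpose (msym X) = msym X"
  by (simp add: msym_def transpose_scalar transpose_add add.commute)

lemma proj_tan_geodesic_residual_accel:
  fixes c v :: "real^'p^'n"
  assumes c: "transpose c ** c = mat 1" and v: "transpose v ** c = - (transpose c ** v)"
  shows "proj_tan c (geodesic_residual k c v (geodesic_accel k c v)) = 0"
proof -
  define S where "S = - (transpose v ** v) - (2 * k) *\<^sub>R ((transpose c ** v) ** (transpose c ** v))"
  have residual: "geodesic_residual k c v (geodesic_accel k c v) = c ** S"
    unfolding geodesic_residual_def geodesic_accel_def S_def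
    by (simp add: matrix_ring_simps c v matrix_mul_eq_extend[OF c] matrix_mul_eq_extend[OF v]
        algebra_simps two_times_matrix)
  have "transpose S = S"
    unfolding S_def by (simp add: matrix_ring_simps v matrix_mul_eq_extend[OF v])
  moreover have "transpose c ** (c ** S) = S" by (simp add: matrix_mul_assoc c)
  ultimately show ?thesis by (simp add: proj_tan_def residual msym_eq_self)
qed

text \<open>The normal component of a solution of the geodesic equation is forced by the constraint;
  this is where \<open>k \<noteq> 1\<close> enters.\<close>
lemma geodesic_residual_normal_part:
  fixes c v a :: "real^'p^'n"
  assumes c: "transpose c ** c = mat 1" and v: "transpose v ** c = - (transpose c ** v)"
    and a: "transpose a ** c + 2 *\<^sub>R (transpose v ** v) + transpose c ** a = 0"
    and k: "k \<noteq> 1" and eq: "proj_tan c (geodesic_residual k c v a) = 0"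
  shows "transpose c ** a = - (transpose v ** v)"
proof -
  define E where "E = geodesic_residual k c v a"
  define Q where
    "Q = (2 * k) *\<^sub>R ((transpose c ** v) ** (transpose c ** v)) + k *\<^sub>R (transpose v ** v)"
  have E: "E = c ** msym (transpose c ** E)" using eq by (simp add: proj_tan_def E_def)
  have "transpose c ** E = msym (transpose c ** E)"
    by (subst E) (simp add: matrix_mul_assoc c)
  then have E_sym: "transpose (transpose c ** E) = transpose c ** E"
    by (metis transpose_msym)
  have cE: "transpose c ** E = (1 - k) *\<^sub>R (transpose c ** a) - Q"
    unfolding E_def geodesic_residual_def Q_def
    by (simp add: matrix_ring_simps c v matrix_mul_eq_extend[OF c] matrix_mul_eq_extend[OF v]
        algebra_simps two_times_matrix)
  have "transpose Q = Q"
    unfolding Q_def by (simp add: matrix_ring_simps v matrix_mul_eq_extend[OF v])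
  with E_sym cE have "(1 - k) *\<^sub>R (transpose a ** c) = (1 - k) *\<^sub>R (transpose c ** a)"
    by (simp add: matrix_ring_simps)
  with k have "transpose a ** c = transpose c ** a" by simp
  with a have "2 *\<^sub>R (transpose c ** a + transpose v ** v) = 0"
    by (simp add: scaleR_2 algebra_simps)
  then show ?thesis by (simp add: eq_neg_iff_add_eq_0)
qed

lemma geodesic_residual_zero_imp_accel:
  fixes c v a :: "real^'p^'n"
  assumes c: "transpose c ** c = mat 1" and v: "transpose v ** c = - (transpose c ** v)"
    and a: "transpose a ** c + 2 *\<^sub>R (transpose v ** v) + transpose c ** a = 0"
    and k: "k \<noteq> 1" and eq: "proj_tan c (geodesic_residual k c v a) = 0"
  shows "a = geodesic_accel k c v"
proof -
  define E where "E = geodesic_residual k c v a"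
  have ca: "transpose c ** a = - (transpose v ** v)"
    by (rule geodesic_residual_normal_part[OF c v a k eq])
  have "E = c ** msym (transpose c ** E)" using eq by (simp add: proj_tan_def E_def)
  moreover have "transpose c ** (c ** msym (transpose c ** E)) = msym (transpose c ** E)"
    by (simp add: matrix_mul_assoc c)
  ultimately have "E = c ** (transpose c ** E)" by metis
  also have "\<dots> =
      c ** (- (transpose v ** v) - (2 * k) *\<^sub>R ((transpose c ** v) ** (transpose c ** v)))"
    unfolding E_def geodesic_residual_def
    by (simp add: matrix_ring_simps c v ca matrix_mul_eq_extend[OF c] matrix_mul_eq_extend[OF v]
        algebra_simps two_times_matrix)
  finally have E_normal: "E = \<dots>" .
  have "E = a - (2 * k) *\<^sub>R (v ** transpose c ** v)"
    unfolding E_def geodesic_residual_def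
    by (simp add: matrix_ring_simps c v ca matrix_mul_eq_extend[OF c] matrix_mul_eq_extend[OF v]
        matrix_mul_eq_extend[OF ca] algebra_simps two_times_matrix)
  then have "a = E + (2 * k) *\<^sub>R (v ** transpose c ** v)" by simp
  also have "\<dots> = geodesic_accel k c v"
    unfolding E_normal geodesic_accel_def by (simp add: matrix_ring_simps algebra_simps)
  finally show ?thesis .
qed

lemma stiefel_curve_derivatives:
  fixes c c1 c2 :: "real \<Rightarrow> real^'p^'n"
  assumes c: "\<And>t. transpose (c t) ** c t = mat 1"
    and c1: "\<And>t. (c has_vector_derivative c1 t) (at t)"
    and c2: "\<And>t. (c1 has_vector_derivative c2 t) (at t)"
  shows "transpose (c1 t) ** c t = - (transpose (c t) ** c1 t)"
    and "transpose (c2 t) ** c t + 2 *\<^sub>R (transpose (c1 t) ** c1 t) + transpose (c t) ** c2 t = 0"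
proof -
  have c1T: "((\<lambda>t. transpose (c t)) has_vector_derivative transpose (c1 t)) (at t)" for t
    by (rule bounded_linear.has_vector_derivative[OF bounded_linear_transpose c1])
  have c2T: "((\<lambda>t. transpose (c1 t)) has_vector_derivative transpose (c2 t)) (at t)" for t
    by (rule bounded_linear.has_vector_derivative[OF bounded_linear_transpose c2])
  have first: "transpose (c t) ** c1 t + transpose (c1 t) ** c t = 0" for t
  proof -
    have "((\<lambda>t. transpose (c t) ** c t) has_vector_derivative
        transpose (c t) ** c1 t + transpose (c1 t) ** c t) (at t)"
      by (rule has_vector_derivative_matrix_mult[OF c1T c1])
    moreover have "((\<lambda>t. transpose (c t) ** c t) has_vector_derivative 0) (at t)"
      by (simp add: c)
    ultimately show ?thesis by (rule vector_derivative_unique_at)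
  qed
  then show "transpose (c1 t) ** c t = - (transpose (c t) ** c1 t)"
    by (simp add: eq_neg_iff_add_eq_0 add.commute)
  have "((\<lambda>t. transpose (c t) ** c1 t + transpose (c1 t) ** c t) has_vector_derivative
      (transpose (c t) ** c2 t + transpose (c1 t) ** c1 t)
        + (transpose (c1 t) ** c1 t + transpose (c2 t) ** c t)) (at t)"
    by (rule has_vector_derivative_add[OF has_vector_derivative_matrix_mult[OF c1T c2]
          has_vector_derivative_matrix_mult[OF c2T c1]])
  moreover have
    "((\<lambda>t. transpose (c t) ** c1 t + transpose (c1 t) ** c t) has_vector_derivative 0) (at t)"
    by (simp add: first)
  ultimately show
    "transpose (c2 t) ** c t + 2 *\<^sub>R (transpose (c1 t) ** c1 t) + transpose (c t) ** c2 t = 0"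
    using vector_derivative_unique_at by (fastforce simp: scaleR_2 algebra_simps)
qed

text \<open>At \<open>\<alpha> = -1\<close> the division by zero makes the coefficient \<open>0\<close>, so this holds for every \<open>\<alpha>\<close>.\<close>
lemma alpha_coef_neq_1: "alpha_coef \<alpha> \<noteq> 1"
  by (cases "\<alpha> + 1 = 0") (auto simp: alpha_coef_def field_simps)

lemma alpha_geodesic_accel:
  fixes c c1 c2 :: "real \<Rightarrow> real^'p^'n"
  assumes c: "\<And>t. c t \<in> stiefel"
    and c1: "\<And>t. (c has_vector_derivative c1 t) (at t)"
    and c2: "\<And>t. (c1 has_vector_derivative c2 t) (at t)"
    and eq: "\<And>t. proj_tan (c t) (geodesic_residual (alpha_coef \<alpha>) (c t) (c1 t) (c2 t)) = 0"
  shows "c2 t = geodesic_accel (alpha_coef \<alpha>) (c t) (c1 t)"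
proof -
  have c': "\<And>t. transpose (c t) ** c t = mat 1" using c by (simp add: stiefel_def)
  show ?thesis
    using geodesic_residual_zero_imp_accel[OF c' stiefel_curve_derivatives[OF c' c1 c2]
        alpha_coef_neq_1 eq] .
qed

section \<open>Closed-form geodesics and the exponential map\<close>

definition geodesic_gen_left :: "real \<Rightarrow> real^'p^'n \<Rightarrow> real^'p^'n \<Rightarrow> real^'n^'n"
  where "geodesic_gen_left k U D =
    (D - U ** (transpose U ** D)) ** transpose U - U ** transpose (D - U ** (transpose U ** D))
      + (2 * (1 - k)) *\<^sub>R (U ** (transpose U ** D) ** transpose U)"

definition geodesic_gen_right :: "real \<Rightarrow> real^'p^'n \<Rightarrow> real^'p^'n \<Rightarrow> real^'p^'p"
  where "geodesic_gen_right k U D = (2 * k - 1) *\<^sub>R (transpose U ** D)"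

definition closed_geodesic :: "real \<Rightarrow> real^'p^'n \<Rightarrow> real^'p^'n \<Rightarrow> real \<Rightarrow> real^'p^'n::finite"
  where "closed_geodesic k U D t =
    mat_exp (t *\<^sub>R geodesic_gen_left k U D) ** U ** mat_exp (t *\<^sub>R geodesic_gen_right k U D)"

definition closed_geodesic_velocity :: "real \<Rightarrow> real^'p^'n \<Rightarrow> real^'p^'n \<Rightarrow> real \<Rightarrow> real^'p^'n::finite"
  where "closed_geodesic_velocity k U D t =
    geodesic_gen_left k U D ** closed_geodesic k U D t
      + closed_geodesic k U D t ** geodesic_gen_right k U D"

context
  fixes k :: real and U D :: "real^'p^'n::finite"
begin

private abbreviation "X \<equiv> geodesic_gen_left k U D"
private abbreviation "Y \<equiv> geodesic_gen_right k U D"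
private abbreviation "c \<equiv> closed_geodesic k U D"
private abbreviation "c' \<equiv> closed_geodesic_velocity k U D"

lemma geodesic_gen_initial_velocity:
  assumes U: "transpose U ** U = mat 1"
  shows "X ** U + U ** Y = D"
  unfolding geodesic_gen_left_def geodesic_gen_right_def
  by (simp add: matrix_ring_simps U matrix_mul_eq_extend[OF U] algebra_simps two_times_matrix)

lemma geodesic_gen_initial_accel:
  assumes U: "transpose U ** U = mat 1" and D: "transpose D ** U = - (transpose U ** D)"
  shows "X ** (X ** U) + 2 *\<^sub>R (X ** U ** Y) + U ** Y ** Y = geodesic_accel k U D"
  unfolding geodesic_gen_left_def geodesic_gen_right_def geodesic_accel_def
  by (simp add: matrix_ring_simps U D matrix_mul_eq_extend[OF U] matrix_mul_eq_extend[OF D]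
      algebra_simps two_times_matrix)

lemma geodesic_gen_skew:
  assumes D: "transpose D ** U = - (transpose U ** D)"
  shows "transpose X = - X" and "transpose Y = - Y"
  unfolding geodesic_gen_left_def geodesic_gen_right_def
  by (simp_all add: matrix_ring_simps D matrix_mul_eq_extend[OF D] algebra_simps two_times_matrix)

lemma has_vector_derivative_closed_geodesic: "(c has_vector_derivative c' t) (at t)"
proof -
  have "((\<lambda>t. mat_exp (t *\<^sub>R X) ** U ** mat_exp (t *\<^sub>R Y)) has_vector_derivative
      (mat_exp (t *\<^sub>R X) ** U) ** (mat_exp (t *\<^sub>R Y) ** Y)
        + (mat_exp (t *\<^sub>R X) ** 0 + (mat_exp (t *\<^sub>R X) ** X) ** U) ** mat_exp (t *\<^sub>R Y)) (at t)"
    by (intro has_vector_derivative_matrix_mult has_vector_derivative_mat_exp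
        has_vector_derivative_const)
  then show ?thesis
    unfolding closed_geodesic_def[abs_def] closed_geodesic_velocity_def closed_geodesic_def
    by (simp add: matrix_ring_simps mat_exp_scaleR_commute add.commute)
qed

lemma has_vector_derivative_closed_geodesic_velocity:
  "(c' has_vector_derivative X ** c' t + c' t ** Y) (at t)"
proof -
  have "((\<lambda>t. X ** c t + c t ** Y) has_vector_derivative
      (X ** c' t + 0 ** c t) + (c t ** 0 + c' t ** Y)) (at t)"
    by (intro has_vector_derivative_add has_vector_derivative_matrix_mult
        has_vector_derivative_const has_vector_derivative_closed_geodesic)
  then show ?thesis unfolding closed_geodesic_velocity_def[abs_def] by simp
qed

lemma closed_geodesic_initial: "c 0 = U" "transpose U ** U = mat 1 \<Longrightarrow> c' 0 = D"
  by (simp_all add: closed_geodesic_velocity_def closed_geodesic_def geodesic_gen_initial_velocity)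

text \<open>The factors \<open>exp(tX)\<close>, \<open>exp(tY)\<close> are orthogonal and commute with \<open>X\<close>, \<open>Y\<close>, so by
  equivariance of the acceleration the geodesic equation at time \<open>t\<close> reduces to time \<open>0\<close>.\<close>
lemma closed_geodesic_properties:
  assumes U: "transpose U ** U = mat 1" and D: "transpose D ** U = - (transpose U ** D)"
  shows "transpose (c t) ** c t = mat 1"
    and "transpose (c' t) ** c t = - (transpose (c t) ** c' t)"
    and "X ** c' t + c' t ** Y = geodesic_accel k (c t) (c' t)"
proof -
  let ?V = "mat_exp (t *\<^sub>R X)" and ?P = "mat_exp (t *\<^sub>R Y)"
  have V: "transpose ?V ** ?V = mat 1"
    by (rule mat_exp_skew_orthogonal) (simp add: transpose_scalar geodesic_gen_skew[OF D])
  have P: "?P ** transpose ?P = mat 1" "transpose ?P ** ?P = mat 1"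
    by (rule mat_exp_skew_orthogonal, simp add: transpose_scalar geodesic_gen_skew[OF D])+
  show orth: "transpose (c t) ** c t = mat 1"
    unfolding closed_geodesic_def
    by (simp add: matrix_ring_simps V U P matrix_mul_eq_extend[OF V] matrix_mul_eq_extend[OF U])
  show "transpose (c' t) ** c t = - (transpose (c t) ** c' t)"
    unfolding closed_geodesic_velocity_def
    by (simp add: matrix_ring_simps geodesic_gen_skew[OF D] orth matrix_mul_eq_extend[OF orth])
  have "c' t = ?V ** (X ** U + U ** Y) ** ?P"
    by (simp add: closed_geodesic_velocity_def closed_geodesic_def matrix_ring_simps
        mat_exp_scaleR_commute)
  moreover have
    "X ** c' t + c' t ** Y = ?V ** (X ** (X ** U) + 2 *\<^sub>R (X ** U ** Y) + U ** Y ** Y) ** ?P"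
    by (simp add: closed_geodesic_velocity_def closed_geodesic_def matrix_ring_simps
        mat_exp_scaleR_commute algebra_simps two_times_matrix)
  ultimately show "X ** c' t + c' t ** Y = geodesic_accel k (c t) (c' t)"
    unfolding geodesic_gen_initial_accel[OF U D] geodesic_gen_initial_velocity[OF U]
      closed_geodesic_def
    by (simp add: geodesic_accel_equivariant[OF V P(1)])
qed

end

lemma closed_geodesic_alpha_geodesic:
  assumes U: "transpose U ** U = mat 1" and D: "transpose D ** U = - (transpose U ** D)"
  shows "alpha_geodesic \<alpha> (closed_geodesic (alpha_coef \<alpha>) U D)"
  unfolding alpha_geodesic_iff
proof (intro conjI allI exI)
  let ?k = "alpha_coef \<alpha>"
  let ?c = "closed_geodesic ?k U D" and ?v = "closed_geodesic_velocity ?k U D"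
  let ?a = "\<lambda>t. geodesic_gen_left ?k U D ** ?v t + ?v t ** geodesic_gen_right ?k U D"
  fix t
  show "?c t \<in> stiefel"
    using closed_geodesic_properties(1)[OF U D] by (simp add: stiefel_def)
  show "(?c has_vector_derivative ?v t) (at t)"
    by (rule has_vector_derivative_closed_geodesic)
  show "(?v has_vector_derivative ?a t) (at t)"
    by (rule has_vector_derivative_closed_geodesic_velocity)
  show "proj_tan (?c t) (geodesic_residual ?k (?c t) (?v t) (?a t)) = 0"
    unfolding closed_geodesic_properties(3)[OF U D]
    by (rule proj_tan_geodesic_residual_accel[OF closed_geodesic_properties(1,2)[OF U D]])
qed

definition geodesic_field :: "real \<Rightarrow> (real^'p^'n) \<times> (real^'p^'n) \<Rightarrow> (real^'p^'n) \<times> (real^'p^'n)"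
  where "geodesic_field k u = (snd u, geodesic_accel k (fst u) (snd u))"

lemma lipschitz_on_geodesic_field:
  assumes S: "bounded S"
  shows "\<exists>L. L-lipschitz_on S (geodesic_field k)"
proof -
  have "bounded_lipschitz_on S (\<lambda>u. geodesic_accel k (fst u) (snd u))"
    unfolding geodesic_accel_def using S
    by (intro bounded_lipschitz_on_diff bounded_lipschitz_on_bilinear[OF bounded_bilinear_matrix_mult]
        bounded_lipschitz_on_linear_compose[OF bounded_linear_scaleR_right]
        bounded_lipschitz_on_linear_compose[OF bounded_linear_transpose]
        bounded_lipschitz_on_bounded_linear bounded_linear_fst bounded_linear_snd)
  with bounded_lipschitz_on_bounded_linear[OF S bounded_linear_snd]
  have "bounded_lipschitz_on S (geodesic_field k)"
    unfolding geodesic_field_def[abs_def] by (rule bounded_lipschitz_on_Pair)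
  then show ?thesis by (simp add: bounded_lipschitz_on_def)
qed

lemma alpha_geodesic_solves_geodesic_field:
  assumes c: "alpha_geodesic \<alpha> c"
  obtains c1 where "\<And>t. (c has_vector_derivative c1 t) (at t)"
    and "\<And>t. ((\<lambda>t. (c t, c1 t)) has_vector_derivative geodesic_field (alpha_coef \<alpha>) (c t, c1 t)) (at t)"
proof -
  obtain c1 c2 where c1: "\<And>t. (c has_vector_derivative c1 t) (at t)"
    and c2: "\<And>t. (c1 has_vector_derivative c2 t) (at t)"
    and eq: "\<And>t. proj_tan (c t) (geodesic_residual (alpha_coef \<alpha>) (c t) (c1 t) (c2 t)) = 0"
    using c unfolding alpha_geodesic_iff by blast
  have "c t \<in> stiefel" for t using c by (simp add: alpha_geodesic_def)
  note accel = alpha_geodesic_accel[OF this c1 c2 eq]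
  show thesis
    by (rule that[OF c1]) (use has_vector_derivative_Pair[OF c1 c2] in \<open>simp add: geodesic_field_def accel\<close>)
qed

lemma alpha_geodesic_unique:
  fixes c d :: "real \<Rightarrow> real^'p^'n"
  assumes c: "alpha_geodesic \<alpha> c" and d: "alpha_geodesic \<alpha> d" and init: "c 0 = d 0"
    and c0: "(c has_vector_derivative D) (at 0)" and d0: "(d has_vector_derivative D) (at 0)"
  shows "c 1 = d 1"
proof -
  obtain c1 where c1: "\<And>t. (c has_vector_derivative c1 t) (at t)"
    and c_ode: "\<And>t. ((\<lambda>t. (c t, c1 t)) has_vector_derivative geodesic_field (alpha_coef \<alpha>) (c t, c1 t)) (at t)"
    using alpha_geodesic_solves_geodesic_field[OF c] by blast
  obtain d1 where d1: "\<And>t. (d has_vector_derivative d1 t) (at t)"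
    and d_ode: "\<And>t. ((\<lambda>t. (d t, d1 t)) has_vector_derivative geodesic_field (alpha_coef \<alpha>) (d t, d1 t)) (at t)"
    using alpha_geodesic_solves_geodesic_field[OF d] by blast
  have "(c 0, c1 0) = (d 0, d1 0)"
    using init vector_derivative_unique_at[OF c1 c0] vector_derivative_unique_at[OF d1 d0] by simp
  with lipschitz_on_geodesic_field c_ode d_ode have "(c 1, c1 1) = (d 1, d1 1)"
    by (rule autonomous_ode_unique) auto
  then show ?thesis by simp
qed

lemma Exp_alpha_closed_geodesic:
  assumes U: "transpose U ** U = mat 1" and D: "transpose D ** U = - (transpose U ** D)"
  shows "Exp_alpha \<alpha> U D = closed_geodesic (alpha_coef \<alpha>) U D 1"
  unfolding Exp_alpha_def
proof (rule the_equality)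
  let ?c = "closed_geodesic (alpha_coef \<alpha>) U D"
  have geo: "alpha_geodesic \<alpha> ?c" by (rule closed_geodesic_alpha_geodesic[OF U D])
  have c0: "?c 0 = U" and c'0: "(?c has_vector_derivative D) (at 0)"
    using has_vector_derivative_closed_geodesic[of "alpha_coef \<alpha>" U D 0]
    by (simp_all add: closed_geodesic_initial U)
  show "\<exists>c. alpha_geodesic \<alpha> c \<and> c 0 = U \<and> (c has_vector_derivative D) (at 0) \<and> c 1 = ?c 1"
    using geo c0 c'0 by blast
  fix Y assume "\<exists>c. alpha_geodesic \<alpha> c \<and> c 0 = U \<and> (c has_vector_derivative D) (at 0) \<and> c 1 = Y"
  then show "Y = ?c 1" using alpha_geodesic_unique[OF _ geo _ _ c'0] c0 by auto
qed

section \<open>Invariance of the shooting iteration\<close>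

definition col_span :: "real^'p^'n \<Rightarrow> real^'p^'n \<Rightarrow> (real^'p^'n) set"
  where "col_span U W = {M. \<exists>X Y. M = U ** X + W ** Y}"

definition skew_span :: "real^'p^'n \<Rightarrow> real^'p^'n \<Rightarrow> (real^'p^'n) set"
  where "skew_span U W = {M. \<exists>A R. skew A \<and> M = U ** A + W ** R}"

lemma subspace_col_span: "subspace (col_span U W)"
proof (unfold subspace_def, intro conjI ballI allI)
  show "0 \<in> col_span U W"
    unfolding col_span_def by (auto intro!: exI[of _ 0])
next
  fix x y assume "x \<in> col_span U W" "y \<in> col_span U W"
  then obtain X1 Y1 X2 Y2 where "x = U ** X1 + W ** Y1" "y = U ** X2 + W ** Y2"
    unfolding col_span_def by blast
  then have "x + y = U ** (X1 + X2) + W ** (Y1 + Y2)" by (simp add: matrix_add_ldistrib)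
  then show "x + y \<in> col_span U W" unfolding col_span_def by blast
next
  fix r x assume "x \<in> col_span U W"
  then obtain X Y where "x = U ** X + W ** Y" unfolding col_span_def by blast
  then have "r *\<^sub>R x = U ** (r *\<^sub>R X) + W ** (r *\<^sub>R Y)"
    by (simp add: matrix_scaleR_right scaleR_right_distrib)
  then show "r *\<^sub>R x \<in> col_span U W" unfolding col_span_def by blast
qed

lemma subspace_skew_span: "subspace (skew_span U W)"
proof (unfold subspace_def, intro conjI ballI allI)
  have "skew 0" by (simp add: skew_def)
  then show "0 \<in> skew_span U W"
    unfolding skew_span_def by (auto intro!: exI[of _ 0])
next
  fix x y assume "x \<in> skew_span U W" "y \<in> skew_span U W"
  then obtain A1 R1 A2 R2 where "skew A1" "x = U ** A1 + W ** R1" "skew A2" "y = U ** A2 + W ** R2"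
    unfolding skew_span_def by blast
  then have "skew (A1 + A2)" "x + y = U ** (A1 + A2) + W ** (R1 + R2)"
    by (simp_all add: skew_def transpose_add matrix_add_ldistrib)
  then show "x + y \<in> skew_span U W" unfolding skew_span_def by blast
next
  fix r x assume "x \<in> skew_span U W"
  then obtain A R where "skew A" "x = U ** A + W ** R" unfolding skew_span_def by blast
  then have "skew (r *\<^sub>R A)" "r *\<^sub>R x = U ** (r *\<^sub>R A) + W ** (r *\<^sub>R R)"
    by (simp_all add: skew_def transpose_scalar matrix_scaleR_right scaleR_right_distrib)
  then show "r *\<^sub>R x \<in> skew_span U W" unfolding skew_span_def by blast
qed

lemma col_span_mult_right:
  assumes "M \<in> col_span U W" shows "M ** P \<in> col_span U W"
proof -
  obtain X Y where "M = U ** X + W ** Y" using assms unfolding col_span_def by blast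
  then have "M ** P = U ** (X ** P) + W ** (Y ** P)"
    by (simp add: matrix_add_rdistrib matrix_mul_assoc)
  then show ?thesis unfolding col_span_def by blast
qed

lemma base_mem_col_span: "U \<in> col_span U W"
proof -
  have "U = U ** mat 1 + W ** 0" by simp
  then show ?thesis unfolding col_span_def by blast
qed

lemma skew_span_mult_right_subset: "skew_span U (Q ** N) \<subseteq> skew_span U Q"
proof
  fix M assume "M \<in> skew_span U (Q ** N)"
  then obtain A R where "skew A" "M = U ** A + Q ** (N ** R)"
    unfolding skew_span_def by (auto simp: matrix_mul_assoc)
  then show "M \<in> skew_span U Q" unfolding skew_span_def by blast
qed

lemma norm_proj_mem_col_span:
  "Y \<in> col_span U W \<Longrightarrow> E \<in> col_span U W \<Longrightarrow> norm_proj g Y E \<in> col_span U W"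
  unfolding norm_proj_def proj_tan_def
  by (intro subspace_scale subspace_diff subspace_col_span col_span_mult_right)

lemma Exp_alpha_zero:
  assumes "transpose U ** U = mat 1"
  shows "Exp_alpha \<alpha> U 0 = U"
  using Exp_alpha_closed_geodesic[OF assms] closed_geodesic_initial(1)[of "alpha_coef \<alpha>" U 0]
  by (simp add: closed_geodesic_def geodesic_gen_left_def geodesic_gen_right_def)

locale stiefel_frame =
  fixes U W :: "real^'p^'n::finite"
  assumes orth: "transpose U ** U = mat 1" and perp: "transpose U ** W = 0"
begin

lemma perp_transpose: "transpose W ** U = 0"
  using perp by (metis matrix_transpose_mul transpose_transpose transpose_zero)

lemma base_coeff: "transpose U ** (U ** X + W ** Y) = X"
  by (simp add: matrix_ring_simps orth perp)

lemma skew_span_tangent: "D \<in> skew_span U W \<Longrightarrow> transpose D ** U = - (transpose U ** D)"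
  unfolding skew_span_def skew_def
  by (auto simp: matrix_ring_simps orth perp perp_transpose matrix_mul_eq_extend[OF orth]
      matrix_mul_eq_extend[OF perp_transpose])

lemma geodesic_gen_left_mult_mem:
  assumes "D \<in> skew_span U W"
  shows "geodesic_gen_left k U D ** Z \<in> col_span U W"
proof -
  obtain A R where D: "D = U ** A + W ** R" using assms unfolding skew_span_def by blast
  have "D - U ** (transpose U ** D) = W ** R" by (simp add: D base_coeff)
  then have "geodesic_gen_left k U D ** Z = U ** (- (transpose (W ** R) ** Z)
      + (2 * (1 - k)) *\<^sub>R (A ** (transpose U ** Z))) + W ** (R ** (transpose U ** Z))"
    unfolding geodesic_gen_left_def D base_coeff by (simp add: matrix_ring_simps algebra_simps)
  then show ?thesis unfolding col_span_def by blast
qed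

lemma Exp_alpha_mem_col_span:
  assumes D: "D \<in> skew_span U W"
  shows "Exp_alpha \<alpha> U D \<in> col_span U W"
proof -
  have "Exp_alpha \<alpha> U D = closed_geodesic (alpha_coef \<alpha>) U D 1"
    by (rule Exp_alpha_closed_geodesic[OF orth skew_span_tangent[OF D]])
  also have "\<dots> \<in> col_span U W"
    unfolding closed_geodesic_def scaleR_one
    by (intro col_span_mult_right mat_exp_mult_in_invariant_subspace closed_subspace
        subspace_col_span base_mem_col_span geodesic_gen_left_mult_mem[OF D])
  finally show ?thesis .
qed

lemma norm_proj_base_mem_skew_span:
  assumes "E \<in> col_span U W"
  shows "norm_proj g U E \<in> skew_span U W"
proof -
  obtain X Y where E: "E = U ** X + W ** Y" using assms unfolding col_span_def by blast
  have "proj_tan U E = U ** (X - msym X) + W ** Y"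
    by (simp add: proj_tan_def E base_coeff matrix_diff_ldistrib)
  moreover have "skew (X - msym X)"
    unfolding skew_def msym_def
    by (simp add: transpose_diff transpose_scalar transpose_add algebra_simps scaleR_2[symmetric])
  ultimately have "proj_tan U E \<in> skew_span U W" unfolding skew_span_def by blast
  then show ?thesis unfolding norm_proj_def by (intro subspace_scale subspace_skew_span)
qed

lemma fold_norm_proj_mem_col_span:
  assumes "\<And>j. Y j \<in> col_span U W"
  shows "E \<in> col_span U W \<Longrightarrow> fold (\<lambda>j E. norm_proj g (Y j) E) js E \<in> col_span U W"
  by (induction js arbitrary: E) (simp_all add: assms norm_proj_mem_col_span)

lemma shoot_pass_mem_skew_span:
  assumes D: "D \<in> skew_span U W" and t0: "t 0 = 0" and Ut: "Ut \<in> col_span U W"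
  shows "fst (shoot_pass \<alpha> t m U Ut D) \<in> skew_span U W"
proof -
  define Y where "Y j = Exp_alpha \<alpha> U (t j *\<^sub>R D)" for j
  define \<gamma> where "\<gamma> = norm (Y m - Ut)"
  have Y: "Y j \<in> col_span U W" for j
    unfolding Y_def by (intro Exp_alpha_mem_col_span subspace_scale subspace_skew_span D)
  have Y0: "Y 0 = U" by (simp add: Y_def t0 Exp_alpha_zero orth)
  have steps: "rev [0..<Suc m] = rev [1..<Suc m] @ [0]" by (simp add: upt_conv_Cons)
  have "fst (shoot_pass \<alpha> t m U Ut D)
      = norm_proj \<gamma> (Y 0) (fold (\<lambda>j E. norm_proj \<gamma> (Y j) E) (rev [1..<Suc m]) (Y m - Ut))"
    unfolding shoot_pass_def Let_def Y_def[symmetric] \<gamma>_def[symmetric] steps by simp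
  also have "\<dots> \<in> skew_span U W"
    unfolding Y0 by (intro norm_proj_base_mem_skew_span fold_norm_proj_mem_col_span Y
        subspace_diff[OF subspace_col_span] Ut)
  finally show ?thesis .
qed

lemma shoot_iter_mem_skew_span:
  assumes "t 0 = 0" and "Ut \<in> col_span U W"
  shows "fst (shoot_iter \<alpha> t m U Ut k) \<in> skew_span U W"
proof (induction k)
  case 0
  show ?case by (simp add: Let_def norm_proj_base_mem_skew_span assms(2))
next
  case (Suc k)
  then show ?case
    by (simp add: Let_def subspace_diff[OF subspace_skew_span] shoot_pass_mem_skew_span assms)
qed

end

theorem proposition3p5:
  fixes N :: "((real, 'p::{finite,linorder}) vec, 'p) vec"
    and U Ut Q :: "((real, 'p) vec, 'n::finite) vec"
    and \<alpha> \<epsilon> :: real and t :: "nat \<Rightarrow> real" and m :: nat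
  assumes "CARD('p) \<le> CARD('n)"
    and "\<alpha> \<noteq> -1"
    and "U \<in> stiefel" and "Ut \<in> stiefel"
    and "Q \<in> stiefel"
    and "\<forall>i j. j < i \<longrightarrow> N $ i $ j = 0"
    and "Q ** N = (mat 1 - U ** transpose U) ** Ut"
    and "\<epsilon> > 0"
    and "t 0 = 0" and "strict_mono_on {0..m} t" and "t m = 1"
  shows "(\<forall>k. (\<forall>i<k. snd (shoot_iter \<alpha> t m U Ut i) > \<epsilon>) \<longrightarrow>
            (\<exists>A R. skew A \<and> fst (shoot_iter \<alpha> t m U Ut k) = U ** A + Q ** R))
       \<and> (\<forall>k. (\<forall>i\<le>k. snd (shoot_iter \<alpha> t m U Ut i) > \<epsilon>) \<longrightarrow>
            (\<exists>A R. skew A \<and>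
               fst (shoot_pass \<alpha> t m U Ut (fst (shoot_iter \<alpha> t m U Ut k))) = U ** A + Q ** R))"
proof -
  \<comment> \<open>The representation holds for every iterate, whatever the loop guard; only \<open>U \<in> St(n,p)\<close>,
    \<open>t 0 = 0\<close> and the equation defining \<open>Q N\<close> are needed.\<close>
  have U: "transpose U ** U = mat 1" using \<open>U \<in> stiefel\<close> by (simp add: stiefel_def)
  define W where "W = Q ** N"
  have W: "W = Ut - U ** (transpose U ** Ut)"
    using \<open>Q ** N = _\<close> by (simp add: W_def matrix_diff_rdistrib matrix_mul_assoc)
  interpret stiefel_frame U W
    by unfold_locales (simp add: U W matrix_diff_ldistrib matrix_mul_assoc)+
  have "Ut = U ** (transpose U ** Ut) + W ** mat 1" by (simp add: W)
  then have "Ut \<in> col_span U W" unfolding col_span_def by blast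
  then have "fst (shoot_iter \<alpha> t m U Ut k) \<in> skew_span U Q"
    and "fst (shoot_pass \<alpha> t m U Ut (fst (shoot_iter \<alpha> t m U Ut k))) \<in> skew_span U Q" for k
    using shoot_iter_mem_skew_span shoot_pass_mem_skew_span skew_span_mult_right_subset \<open>t 0 = 0\<close>
    unfolding W_def by blast+
  then show ?thesis unfolding skew_span_def by blast
qed

end
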